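(* Let $\psi$ be a convex function on a convex subset of a real vector space, with (sub)gradient $\nabla\psi$, which is $\eta$-exp-concave for some $\eta>0$ and satisfies $0\le\psi\le m$. Then for all $x,y$ in its domain, \[ \psi(x)-\psi(y)-\langle\nabla\psi|_y,x-y\rangle\ \ge\ \frac{|\psi(x)-\psi(y)|^2}{2m\vee(4/\eta)}. \]
   Context: $\psi$ is $\eta$-exp-concave if $e^{-\eta\psi}$ is concave. $a\vee b=\max(a,b)$. *)

theory Defs
  imports "HOL-Analysis.Analysis"
begin

text \<open>D assigns to each point y of C a (sub)gradient of f at y, given as a linear
  functional D y, so that the pairing of the gradient at y with x - y is D y (x - y).\<close>
definition subgradient_on :: "'a::real_vector set \<Rightarrow> ('a \<Rightarrow> real) \<Rightarrow> ('a \<Rightarrow> 'a \<Rightarrow> real) \<Rightarrow> bool" where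
  "subgradient_on C f D \<longleftrightarrow>
     (\<forall>y\<in>C. linear (D y) \<and> (\<forall>x\<in>C. f y + D y (x - y) \<le> f x))"

definition exp_concave_on :: "real \<Rightarrow> 'a::real_vector set \<Rightarrow> ('a \<Rightarrow> real) \<Rightarrow> bool" where
  "exp_concave_on \<eta> C f \<longleftrightarrow> concave_on C (\<lambda>x. exp (- \<eta> * f x))"

end

theory Submission
  imports Defs
begin

text \<open>Along the segment from y to x, concavity of exp(-\<eta>\<psi>) bounds it from below by the chord,
  while the subgradient inequality bounds it from above by exp(-\<eta>(\<psi> y + t g)), where g is the
  pairing of the gradient at y with x - y; comparing slopes at t = 0 gives
  exp(-u) - 1 \<le> -\<eta> g for u = \<eta>(\<psi> x - \<psi> y). Hence the Bregman divergence \<psi> x - \<psi> y - g is at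
  least (exp(-u) - 1 + u)/\<eta>. Since u \<le> \<eta> m, the elementary bound exp(-u) - 1 + u \<ge> u^2/c for
  c \<ge> 4 and u \<le> c/2 (a Pade bound for u \<ge> 0, the quadratic Taylor bound for u < 0), applied
  with c = \<eta> (2m \<or> 4/\<eta>), finishes the proof.\<close>

lemma exp_minus_ge_Pade:
  fixes u :: real
  assumes "u \<ge> 0"
  shows "2 - u \<le> exp (-u) * (2 + u)"
proof -
  let ?p = "\<lambda>u::real. exp (-u) * (2 + u) - 2 + u"
  have "?p 0 \<le> ?p u"
  proof (rule DERIV_nonneg_imp_nondecreasing[OF assms])
    fix x :: real
    have "exp (-x) * (1 + x) \<le> exp (-x) * exp x"
      by (intro mult_left_mono exp_ge_add_one_self) simp
    then have "0 \<le> 1 - exp (-x) * (1 + x)"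
      by (simp flip: exp_add)
    moreover have "(?p has_real_derivative (1 - exp (-x) * (1 + x))) (at x)"
      by (rule derivative_eq_intros refl | simp)+ (simp add: algebra_simps)
    ultimately show "\<exists>y. (?p has_real_derivative y) (at x) \<and> 0 \<le> y"
      by blast
  qed
  then show ?thesis
    by simp
qed

lemma exp_minus_sub_one_add_ge_square:
  fixes u c :: real
  assumes "c \<ge> 4" and "u \<le> c / 2"
  shows "u\<^sup>2 / c \<le> exp (-u) - 1 + u"
proof (cases "u \<ge> 0")
  case True
  have "u\<^sup>2 \<le> (exp (-u) - 1 + u) * (2 + u)"
    using exp_minus_ge_Pade[OF True] by (simp add: algebra_simps power2_eq_square)
  then have "u\<^sup>2 / (2 + u) \<le> exp (-u) - 1 + u"
    using True by (simp add: divide_le_eq)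
  moreover have "u\<^sup>2 / c \<le> u\<^sup>2 / (2 + u)"
    using True assms by (intro divide_left_mono) auto
  ultimately show ?thesis
    by linarith
next
  case False
  have "u\<^sup>2 / c \<le> u\<^sup>2 / 2"
    using assms by (intro divide_left_mono) auto
  also have "\<dots> \<le> exp (-u) - 1 + u"
    using exp_lower_Taylor_quadratic[of "-u"] False by simp
  finally show ?thesis .
qed

lemma le_of_affine_le_exp:
  fixes a w :: real
  assumes "\<And>t. 0 < t \<Longrightarrow> t < 1 \<Longrightarrow> 1 + t * a \<le> exp (t * w)"
  shows "a \<le> w"
proof -
  have "((\<lambda>t. exp (t * w)) has_real_derivative w) (at 0 within {0<..})"
    by (rule derivative_eq_intros refl | simp)+
  then have "((\<lambda>t. (exp (t * w) - 1) / t) \<longlongrightarrow> w) (at_right 0)"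
    by (simp add: has_field_derivative_iff)
  moreover have "\<forall>\<^sub>F t in at_right 0. a \<le> (exp (t * w) - 1) / t"
    using eventually_at_right_real[OF zero_less_one]
  proof (rule eventually_mono)
    fix t :: real
    assume "t \<in> {0<..<1}"
    then show "a \<le> (exp (t * w) - 1) / t"
      using assms[of t] by (simp add: le_divide_eq mult.commute)
  qed
  ultimately show ?thesis
    by (rule tendsto_lowerbound) simp
qed

lemma exp_concave_on_subgradient_bound:
  fixes f :: "'a::real_vector \<Rightarrow> real"
  assumes "convex C" and "subgradient_on C f D" and "\<eta> \<ge> 0" and "exp_concave_on \<eta> C f"
    and "x \<in> C" and "y \<in> C"
  shows "exp (- \<eta> * (f x - f y)) - 1 \<le> - \<eta> * D y (x - y)"
proof (rule le_of_affine_le_exp)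
  fix t :: real
  assume t: "0 < t" "t < 1"
  define z where "z = (1 - t) *\<^sub>R y + t *\<^sub>R x"
  have "z \<in> C"
    unfolding z_def using assms(1,5,6) t by (intro convexD) auto
  have "z - y = t *\<^sub>R (x - y)"
    unfolding z_def by (simp add: algebra_simps)
  then have "D y (z - y) = t * D y (x - y)"
    using assms(2,6) unfolding subgradient_on_def by (simp add: linear_scale)
  then have tangent: "f y + t * D y (x - y) \<le> f z"
    using assms(2,6) \<open>z \<in> C\<close> unfolding subgradient_on_def by metis
  have "(1 - t) * exp (- \<eta> * f y) + t * exp (- \<eta> * f x) \<le> exp (- \<eta> * f z)"
    using assms(4-6) t unfolding exp_concave_on_def z_def by (intro concave_onD) auto
  also have "\<dots> \<le> exp (- \<eta> * (f y + t * D y (x - y)))"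
    using tangent assms(3) by (simp add: mult_left_mono)
  finally have "exp (- \<eta> * f y) * (1 + t * (exp (- \<eta> * (f x - f y)) - 1))
      \<le> exp (- \<eta> * f y) * exp (t * (- \<eta> * D y (x - y)))"
    by (simp add: algebra_simps flip: exp_add)
  then show "1 + t * (exp (- \<eta> * (f x - f y)) - 1) \<le> exp (t * (- \<eta> * D y (x - y)))"
    by simp
qed

theorem proposition4:
  fixes C :: "'a::real_vector set" and \<psi> :: "'a \<Rightarrow> real"
    and D :: "'a \<Rightarrow> 'a \<Rightarrow> real" and \<eta> m :: real
  assumes "convex C"
    and "convex_on C \<psi>"
    and "subgradient_on C \<psi> D"
    and "\<eta> > 0"
    and "exp_concave_on \<eta> C \<psi>"
    and "\<And>x. x \<in> C \<Longrightarrow> 0 \<le> \<psi> x \<and> \<psi> x \<le> m"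
    and "x \<in> C" and "y \<in> C"
  shows "\<psi> x - \<psi> y - D y (x - y) \<ge> \<bar>\<psi> x - \<psi> y\<bar>^2 / max (2 * m) (4 / \<eta>)"
proof -
  define d where "d = \<psi> x - \<psi> y"
  define M where "M = max (2 * m) (4 / \<eta>)"
  have slope: "exp (- (\<eta> * d)) - 1 \<le> - \<eta> * D y (x - y)"
    using exp_concave_on_subgradient_bound[OF assms(1,3) _ assms(5,7,8)] assms(4)
    unfolding d_def by simp
  have "d \<le> m"
    using assms(6-8) unfolding d_def by (metis diff_le_eq le_add_same_cancel1 order.trans)
  then have "\<eta> * d \<le> \<eta> * M / 2"
    using assms(4) unfolding M_def by (simp add: mult_left_mono)
  moreover have "\<eta> * M \<ge> \<eta> * (4 / \<eta>)"
    using assms(4) unfolding M_def by (intro mult_left_mono) auto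
  then have "\<eta> * M \<ge> 4"
    using assms(4) by simp
  ultimately have "(\<eta> * d)\<^sup>2 / (\<eta> * M) \<le> exp (- (\<eta> * d)) - 1 + \<eta> * d"
    by (intro exp_minus_sub_one_add_ge_square) auto
  then have "\<eta> * (\<bar>d\<bar>^2 / M) \<le> \<eta> * (d - D y (x - y))"
    using slope assms(4) by (simp add: power_mult_distrib power2_eq_square algebra_simps)
  then have "\<bar>d\<bar>^2 / M \<le> d - D y (x - y)"
    using assms(4) by (meson mult_le_cancel_left_pos)
  then show ?thesis
    unfolding d_def M_def by simp
qed

end
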